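(* For all integers $n_1\ge 3$ and $n_2\ge 3$, $\lambda_3(P_{n_1}\circ P_{n_2})=n_2+1$, where $P_n$ denotes the path on $n$ vertices.
   Context: For a graph $G$ and $S\subseteq V(G)$ with $|S|\ge 2$, an $S$-tree is a subgraph of $G$ that is a tree containing all vertices of $S$; $\lambda(S)$ is the maximum number of pairwise edge-disjoint $S$-trees in $G$, and $\lambda_3(G)=\min\{\lambda(S): S\subseteq V(G),\ |S|=3\}$. The lexicographic product $G\circ H$ has vertex set $V(G)\times V(H)$, and $(u,v)$ is adjacent to $(u',v')$ iff either $uu'\in E(G)$, or $u=u'$ and $vv'\in E(H)$. *)

theory Defs
  imports Main
begin

type_synonym 'a graph = "'a set \<times> 'a set set"

definition verts :: "'a graph \<Rightarrow> 'a set" where "verts G = fst G"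
definition edges :: "'a graph \<Rightarrow> 'a set set" where "edges G = snd G"

definition is_graph :: "'a graph \<Rightarrow> bool" where
  "is_graph G \<longleftrightarrow> finite (verts G) \<and>
     (\<forall>e\<in>edges G. e \<subseteq> verts G \<and> card e = 2)"

definition subgraph :: "'a graph \<Rightarrow> 'a graph \<Rightarrow> bool" where
  "subgraph H G \<longleftrightarrow> is_graph H \<and> verts H \<subseteq> verts G \<and> edges H \<subseteq> edges G"

definition adj_rel :: "'a graph \<Rightarrow> ('a \<times> 'a) set" where
  "adj_rel G = {(x, y). {x, y} \<in> edges G}"

definition connected_graph :: "'a graph \<Rightarrow> bool" where
  "connected_graph G \<longleftrightarrow> verts G \<noteq> {} \<and>
     (\<forall>x\<in>verts G. \<forall>y\<in>verts G. (x, y) \<in> (adj_rel G)\<^sup>*)"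

definition has_cycle :: "'a graph \<Rightarrow> bool" where
  "has_cycle G \<longleftrightarrow> (\<exists>xs. length xs \<ge> 3 \<and> distinct xs \<and> set xs \<subseteq> verts G \<and>
     (\<forall>i<length xs. {xs ! i, xs ! ((i + 1) mod length xs)} \<in> edges G))"

definition is_tree :: "'a graph \<Rightarrow> bool" where
  "is_tree T \<longleftrightarrow> connected_graph T \<and> \<not> has_cycle T"

definition S_tree :: "'a graph \<Rightarrow> 'a set \<Rightarrow> 'a graph \<Rightarrow> bool" where
  "S_tree G S T \<longleftrightarrow> subgraph T G \<and> is_tree T \<and> S \<subseteq> verts T"

definition lambda_S :: "'a graph \<Rightarrow> 'a set \<Rightarrow> nat" where
  "lambda_S G S = Sup {k. \<exists>T :: nat \<Rightarrow> 'a graph.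
      (\<forall>i<k. S_tree G S (T i)) \<and>
      (\<forall>i<k. \<forall>j<k. i \<noteq> j \<longrightarrow> edges (T i) \<inter> edges (T j) = {})}"

definition lambda3 :: "'a graph \<Rightarrow> nat" where
  "lambda3 G = Inf {lambda_S G S | S. S \<subseteq> verts G \<and> card S = 3}"

definition lex_prod :: "'a graph \<Rightarrow> 'b graph \<Rightarrow> ('a \<times> 'b) graph" where
  "lex_prod G H = (verts G \<times> verts H,
     {{(u, v), (u', v')} | u v u' v'.
        u \<in> verts G \<and> u' \<in> verts G \<and> v \<in> verts H \<and> v' \<in> verts H \<and>
        ({u, u'} \<in> edges G \<or> (u = u' \<and> {v, v'} \<in> edges H))})"

definition path_graph :: "nat \<Rightarrow> nat graph" where
  "path_graph n = ({0..<n}, {{i, i + 1} | i. i + 1 < n})"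

end

theory Submission
  imports Defs "HOL-Combinatorics.Transposition"
begin

text \<open>
  Upper bound: every \<open>S\<close>-tree has an edge at each vertex of \<open>S\<close>, so \<open>\<lambda>(S)\<close> is
  at most the degree of any vertex of \<open>S\<close>; the corner \<open>(0, 0)\<close> has degree
  \<open>m + 1\<close>.

  Lower bound: instead of trees we construct \<open>m + 1\<close> pairwise disjoint edge
  sets (colour classes), each containing \<open>S\<close> in one connected component; a
  minimal connected subset of such a component is an \<open>S\<close>-tree.  The classes
  are given by an explicit colouring of the edges between consecutive layers
  (locale \<open>layered_colouring\<close>) that handles terminals in distinct layers
  and, with one recoloured edge, two terminals in a common layer.  Three
  terminals in one layer are handled by stars from a neighbouring layer, and
  the remaining two-layer configurations by the layer-reversing automorphism.
\<close>


definition adj :: "'a set set \<Rightarrow> ('a \<times> 'a) set" where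
  "adj F = {(x, y). {x, y} \<in> F}"

definition links :: "'a set set \<Rightarrow> 'a set \<Rightarrow> bool" where
  "links F S \<longleftrightarrow> (\<forall>x\<in>S. \<forall>y\<in>S. (x, y) \<in> (adj F)\<^sup>*)"

definition degree :: "'a graph \<Rightarrow> 'a \<Rightarrow> nat" where
  "degree G v = card {e \<in> edges G. v \<in> e}"

lemma adj_rel_eq_adj: "adj_rel G = adj (edges G)"
  by (simp add: adj_rel_def adj_def)

lemma reach_sym:
  assumes "(x, y) \<in> (adj F)\<^sup>*" shows "(y, x) \<in> (adj F)\<^sup>*"
proof -
  have "sym (adj F)" by (auto simp: sym_def adj_def insert_commute)
  then show ?thesis using assms by (auto dest: symD sym_rtrancl)
qed

lemma reach_edge: "{x, y} \<in> F \<Longrightarrow> (x, y) \<in> (adj F)\<^sup>*"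
  by (auto simp: adj_def)

lemma reach_edge_step:
  "(x, y) \<in> (adj F)\<^sup>* \<Longrightarrow> {y, z} \<in> F \<Longrightarrow> (x, z) \<in> (adj F)\<^sup>*"
  by (auto simp: adj_def intro: rtrancl_into_rtrancl)

lemma reach_edge_step':
  "(x, y) \<in> (adj F)\<^sup>* \<Longrightarrow> {z, y} \<in> F \<Longrightarrow> (x, z) \<in> (adj F)\<^sup>*"
  by (simp add: reach_edge_step insert_commute)

lemma links_from_hub:
  assumes "\<And>x. x \<in> S \<Longrightarrow> (z, x) \<in> (adj F)\<^sup>*"
  shows "links F S"
  unfolding links_def using assms by (meson reach_sym rtrancl_trans)

section \<open>From connected edge sets to Steiner trees\<close>

text \<open>An edge of a cycle can be removed without disconnecting its endpoints:
  walk around the rest of the cycle.\<close>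
lemma cycle_edge_removable:
  assumes len: "length xs \<ge> 3" and dist: "distinct xs"
    and cyc: "\<forall>i<length xs. {xs ! i, xs ! ((i + 1) mod length xs)} \<in> D"
  shows "(xs ! 1, xs ! 0) \<in> (adj (D - {{xs ! 0, xs ! 1}}))\<^sup>*"
proof -
  define L where "L = length xs"
  define D' where "D' = D - {{xs ! 0, xs ! 1}}"
  have far: "xs ! i \<notin> {xs ! 0, xs ! 1}" if "2 \<le> i" "i < L" for i
  proof -
    have "i \<noteq> 0" "i \<noteq> 1" "0 < L" "1 < L" using that by auto
    then show ?thesis
      using that nth_eq_iff_index_eq[OF dist] by (auto simp: L_def)
  qed
  have kept: "{x, xs ! i} \<in> D'" if "{x, xs ! i} \<in> D" "2 \<le> i" "i < L" for x i
    using that far[of i] by (auto simp: D'_def)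
  have walk: "(xs ! 1, xs ! j) \<in> (adj D')\<^sup>*" if "1 \<le> j" "j < L" for j
    using that
  proof (induction j)
    case (Suc j)
    show ?case
    proof (cases "j = 0")
      case False
      have "{xs ! j, xs ! Suc j} \<in> D"
        using cyc[rule_format, of j] Suc.prems by (simp add: L_def)
      then have "{xs ! j, xs ! Suc j} \<in> D'"
        using kept False Suc.prems by simp
      then show ?thesis
        using Suc False by (simp add: reach_edge_step)
    qed simp
  qed simp
  have "Suc (L - 1) = L" using len by (simp add: L_def)
  then have "{xs ! (L - 1), xs ! 0} \<in> D"
    using cyc[rule_format, of "L - 1"] len by (simp add: L_def)
  then have "{xs ! 0, xs ! (L - 1)} \<in> D'"
    using kept[of "xs ! 0" "L - 1"] len by (simp add: L_def insert_commute)
  then show ?thesis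
    using walk[of "L - 1"] len reach_edge_step[of "xs ! 1" "xs ! (L - 1)" D' "xs ! 0"]
    by (simp add: L_def D'_def insert_commute)
qed

text \<open>Every connected edge set on a finite vertex set contains a spanning tree:
  an edge set of minimum cardinality keeping \<open>V\<close> connected is acyclic by
  the previous lemma.\<close>
lemma minimal_connected_is_tree:
  assumes fin: "finite V" and D: "\<forall>e\<in>D. e \<subseteq> V \<and> card e = 2" and ne: "V \<noteq> {}"
    and conn: "links D V"
  shows "\<exists>D'\<subseteq>D. is_tree (V, D')"
proof -
  define P where "P D' \<longleftrightarrow> D' \<subseteq> D \<and> links D' V" for D'
  obtain D0 where P0: "P D0" and min: "\<And>D'. P D' \<Longrightarrow> card D0 \<le> card D'"
    using ex_has_least_nat[of P D card] conn by (auto simp: P_def)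
  have "finite D"
    using D by (intro finite_subset[OF _ finite_Pow_iff[THEN iffD2, OF fin]]) auto
  then have finD0: "finite D0" using P0 finite_subset by (auto simp: P_def)
  have "\<not> has_cycle (V, D0)"
  proof
    assume "has_cycle (V, D0)"
    then obtain xs where xs: "length xs \<ge> 3" "distinct xs"
        "\<forall>i<length xs. {xs ! i, xs ! ((i + 1) mod length xs)} \<in> D0"
      by (auto simp: has_cycle_def edges_def)
    define e where "e = {xs ! 0, xs ! 1}"
    have "e \<in> D0" using xs(1) xs(3)[rule_format, of 0] by (force simp: e_def)
    have detour: "(xs ! 1, xs ! 0) \<in> (adj (D0 - {e}))\<^sup>*"
      using cycle_edge_removable[OF xs] by (simp add: e_def)
    have "adj D0 \<subseteq> (adj (D0 - {e}))\<^sup>*"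
    proof
      fix p assume "p \<in> adj D0"
      then obtain x y where p: "p = (x, y)" "{x, y} \<in> D0" by (auto simp: adj_def)
      show "p \<in> (adj (D0 - {e}))\<^sup>*"
      proof (cases "{x, y} = e")
        case True
        then have "(x, y) = (xs ! 0, xs ! 1) \<or> (x, y) = (xs ! 1, xs ! 0)"
          by (auto simp: e_def doubleton_eq_iff)
        then show ?thesis using detour reach_sym[OF detour] p by auto
      qed (use p in \<open>auto simp: adj_def\<close>)
    qed
    then have "(adj D0)\<^sup>* \<subseteq> (adj (D0 - {e}))\<^sup>*"
      by (rule rtrancl_subset_rtrancl)
    then have "P (D0 - {e})" using P0 by (auto simp: P_def links_def)
    moreover have "card (D0 - {e}) < card D0"
      using card_Diff1_less[OF finD0 \<open>e \<in> D0\<close>] .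
    ultimately show False using min by fastforce
  qed
  then have "is_tree (V, D0)"
    using P0 ne by (simp add: P_def is_tree_def connected_graph_def adj_rel_eq_adj links_def
        verts_def edges_def)
  then show ?thesis using P0 by (auto simp: P_def)
qed

lemma finite_edges: "is_graph G \<Longrightarrow> finite (edges G)"
  unfolding is_graph_def by (meson Pow_iff finite_Pow_iff finite_subset subsetI)

text \<open>If an edge set \<open>F\<close> links \<open>S\<close>, then \<open>F\<close> contains an \<open>S\<close>-tree: take a
  spanning tree of the component of \<open>F\<close> containing \<open>S\<close>.\<close>
lemma S_tree_inside:
  assumes G: "is_graph G" and F: "F \<subseteq> edges G" and S: "S \<subseteq> verts G" "S \<noteq> {}"
    and linked: "links F S"
  shows "\<exists>T. S_tree G S T \<and> edges T \<subseteq> F"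
proof -
  obtain r where r: "r \<in> S" using S(2) by blast
  define C where "C = {y. (r, y) \<in> (adj F)\<^sup>*}"
  define D where "D = {e \<in> F. e \<subseteq> C}"
  have C_verts: "C \<subseteq> verts G"
  proof
    fix y assume "y \<in> C"
    then have "(r, y) \<in> (adj F)\<^sup>*" by (simp add: C_def)
    then show "y \<in> verts G"
    proof (induction rule: rtrancl_induct)
      case (step y z)
      then have "{y, z} \<in> edges G" using F by (auto simp: adj_def)
      then show ?case using G by (auto simp: is_graph_def)
    qed (use S r in auto)
  qed
  have D_edges: "\<forall>e\<in>D. e \<subseteq> C \<and> card e = 2"
    using F G by (auto simp: D_def is_graph_def)
  have inside: "(r, y) \<in> (adj D)\<^sup>*" if "(r, y) \<in> (adj F)\<^sup>*" for y
    using that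
  proof (induction rule: rtrancl_induct)
    case (step y z)
    then have "{y, z} \<in> D" by (auto simp: C_def D_def adj_def intro: rtrancl_into_rtrancl)
    then show ?case using step(3) by (rule reach_edge_step[rotated])
  qed simp
  have "links D C"
    by (rule links_from_hub[of C r]) (auto simp: C_def inside)
  moreover have "finite C" using C_verts G finite_subset by (auto simp: is_graph_def)
  moreover have "C \<noteq> {}" by (auto simp: C_def)
  ultimately obtain D' where D': "D' \<subseteq> D" "is_tree (C, D')"
    using minimal_connected_is_tree[OF _ D_edges] by blast
  have "S \<subseteq> C" using linked r by (auto simp: C_def links_def)
  moreover have "is_graph (C, D')"
    using D' D_edges \<open>finite C\<close> by (auto simp: is_graph_def verts_def edges_def)
  ultimately have "S_tree G S (C, D')"
    using D' C_verts F by (auto simp: S_tree_def subgraph_def verts_def edges_def D_def)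
  moreover have "edges (C, D') \<subseteq> F" using D' by (auto simp: edges_def D_def)
  ultimately show ?thesis by blast
qed

section \<open>Bounds on \<open>\<lambda>(S)\<close>\<close>

lemma S_tree_edge_at:
  assumes "S_tree G S T" "v \<in> S" "w \<in> S" "v \<noteq> w"
  shows "\<exists>e\<in>edges T. v \<in> e"
proof -
  have "(v, w) \<in> (adj_rel T)\<^sup>*"
    using assms unfolding S_tree_def is_tree_def connected_graph_def by blast
  then obtain y where "(v, y) \<in> adj_rel T"
    using \<open>v \<noteq> w\<close> by (cases rule: converse_rtranclE) auto
  then show ?thesis by (auto simp: adj_rel_def)
qed

lemma disjoint_S_trees_le_degree:
  assumes G: "is_graph G" and vw: "v \<in> S" "w \<in> S" "v \<noteq> w"
    and T: "\<forall>i<k. S_tree G S (T i)"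
    and disj: "\<forall>i<k. \<forall>j<k. i \<noteq> j \<longrightarrow> edges (T i) \<inter> edges (T j) = {}"
  shows "k \<le> degree G v"
proof -
  define f where "f i = (SOME e. e \<in> edges (T i) \<and> v \<in> e)" for i
  have f: "f i \<in> edges (T i) \<and> v \<in> f i" if "i < k" for i
  proof -
    have "\<exists>e. e \<in> edges (T i) \<and> v \<in> e" using S_tree_edge_at[OF _ vw] T that by blast
    then show ?thesis unfolding f_def by (rule someI_ex)
  qed
  have "inj_on f {..<k}"
  proof (rule inj_onI)
    fix i j assume ij: "i \<in> {..<k}" "j \<in> {..<k}" "f i = f j"
    then have "f i \<in> edges (T i) \<inter> edges (T j)" using f[of i] f[of j] by simp
    then show "i = j" using disj ij by blast
  qed
  moreover have "f ` {..<k} \<subseteq> {e \<in> edges G. v \<in> e}"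
  proof
    fix e assume "e \<in> f ` {..<k}"
    then obtain i where i: "i < k" "e = f i" by auto
    then have "edges (T i) \<subseteq> edges G" using T by (simp add: S_tree_def subgraph_def)
    then show "e \<in> {e \<in> edges G. v \<in> e}" using f[OF i(1)] i(2) by auto
  qed
  moreover have "finite {e \<in> edges G. v \<in> e}" using finite_edges[OF G] by simp
  ultimately have "card {..<k} \<le> degree G v"
    unfolding degree_def by (rule card_inj_on_le)
  then show ?thesis by simp
qed

definition packing_sizes :: "'a graph \<Rightarrow> 'a set \<Rightarrow> nat set" where
  "packing_sizes G S = {k. \<exists>T :: nat \<Rightarrow> 'a graph. (\<forall>i<k. S_tree G S (T i)) \<and>
      (\<forall>i<k. \<forall>j<k. i \<noteq> j \<longrightarrow> edges (T i) \<inter> edges (T j) = {})}"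

lemma lambda_S_eq_Sup: "lambda_S G S = Sup (packing_sizes G S)"
  by (simp add: lambda_S_def packing_sizes_def)

lemma packing_sizes_le_degree:
  assumes "is_graph G" "v \<in> S" "w \<in> S" "v \<noteq> w" "k \<in> packing_sizes G S"
  shows "k \<le> degree G v"
  using assms disjoint_S_trees_le_degree[OF assms(1-4)] by (auto simp: packing_sizes_def)

lemma lambda_S_le_degree:
  assumes "is_graph G" "v \<in> S" "w \<in> S" "v \<noteq> w"
  shows "lambda_S G S \<le> degree G v"
proof -
  have "0 \<in> packing_sizes G S" by (simp add: packing_sizes_def)
  then show ?thesis
    unfolding lambda_S_eq_Sup using packing_sizes_le_degree[OF assms]
    by (intro cSup_least) auto
qed

definition linking_family :: "'a graph \<Rightarrow> 'a set \<Rightarrow> nat \<Rightarrow> (nat \<Rightarrow> 'a set set) \<Rightarrow> bool" where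
  "linking_family G S k F \<longleftrightarrow> (\<forall>i<k. F i \<subseteq> edges G \<and> links (F i) S) \<and>
     (\<forall>i<k. \<forall>j<k. i \<noteq> j \<longrightarrow> F i \<inter> F j = {})"

lemma linking_family_le_lambda_S:
  assumes G: "is_graph G" and S: "S \<subseteq> verts G" and vw: "v \<in> S" "w \<in> S" "v \<noteq> w"
    and fam: "linking_family G S k F"
  shows "k \<le> lambda_S G S"
proof -
  have "\<exists>T. S_tree G S T \<and> edges T \<subseteq> F i" if "i < k" for i
  proof -
    have "F i \<subseteq> edges G" "links (F i) S" using fam that by (auto simp: linking_family_def)
    moreover have "S \<noteq> {}" using vw by blast
    ultimately show ?thesis using S_tree_inside[OF G _ S] by blast
  qed
  then have "\<forall>i. \<exists>T. i < k \<longrightarrow> S_tree G S T \<and> edges T \<subseteq> F i" by blast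
  from choice[OF this] obtain T
    where T: "\<forall>i. i < k \<longrightarrow> S_tree G S (T i) \<and> edges (T i) \<subseteq> F i" by blast
  have "k \<in> packing_sizes G S"
    unfolding packing_sizes_def
  proof (intro CollectI exI[of _ T] conjI allI impI)
    fix i j assume ij: "i < k" "j < k" "i \<noteq> j"
    then have "edges (T i) \<subseteq> F i" "edges (T j) \<subseteq> F j" using T by auto
    moreover have "F i \<inter> F j = {}" using fam ij by (simp add: linking_family_def)
    ultimately show "edges (T i) \<inter> edges (T j) = {}" by blast
  qed (use T in simp)
  moreover have "bdd_above (packing_sizes G S)"
    using packing_sizes_le_degree[OF G vw] by (rule bdd_aboveI)
  ultimately show ?thesis unfolding lambda_S_eq_Sup by (rule cSup_upper)
qed

lemma reach_image:
  "(x, y) \<in> (adj F)\<^sup>* \<Longrightarrow> (\<phi> x, \<phi> y) \<in> (adj ((`) \<phi> ` F))\<^sup>*"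
proof (induction rule: rtrancl_induct)
  case (step y z)
  then have "{y, z} \<in> F" by (simp add: adj_def)
  then have "\<phi> ` {y, z} \<in> (`) \<phi> ` F" by (rule imageI)
  then show ?case using step(3) by (simp add: reach_edge_step)
qed simp

lemma linking_family_image:
  assumes G: "is_graph G" and inj: "inj_on \<phi> (verts G)"
    and hom: "\<And>e. e \<in> edges G \<Longrightarrow> \<phi> ` e \<in> edges G"
    and fam: "linking_family G S k F"
  shows "linking_family G (\<phi> ` S) k (\<lambda>i. (`) \<phi> ` F i)"
  unfolding linking_family_def
proof (intro conjI allI impI)
  fix i assume "i < k"
  then have Fi: "F i \<subseteq> edges G" "links (F i) S" using fam by (auto simp: linking_family_def)
  show "(`) \<phi> ` F i \<subseteq> edges G" using Fi(1) hom by blast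
  show "links ((`) \<phi> ` F i) (\<phi> ` S)"
    unfolding links_def
  proof (intro ballI)
    fix x' y' assume "x' \<in> \<phi> ` S" "y' \<in> \<phi> ` S"
    then obtain x y where "x \<in> S" "y \<in> S" "x' = \<phi> x" "y' = \<phi> y" by blast
    then show "(x', y') \<in> (adj ((`) \<phi> ` F i))\<^sup>*"
      using Fi(2) reach_image[of x y "F i" \<phi>] by (simp add: links_def)
  qed
next
  fix i j assume ij: "i < k" "j < k" "i \<noteq> j"
  have "edges G \<subseteq> Pow (verts G)" using G by (auto simp: is_graph_def)
  then have "inj_on ((`) \<phi>) (edges G)"
    by (rule inj_on_subset[OF inj_on_image_Pow[OF inj]])
  moreover have "F i \<subseteq> edges G" "F j \<subseteq> edges G"
    using fam ij by (auto simp: linking_family_def)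
  ultimately have "(`) \<phi> ` (F i \<inter> F j) = (`) \<phi> ` F i \<inter> (`) \<phi> ` F j"
    by (rule inj_on_image_Int)
  moreover have "F i \<inter> F j = {}" using fam ij by (auto simp: linking_family_def)
  ultimately show "(`) \<phi> ` F i \<inter> (`) \<phi> ` F j = {}" by simp
qed

section \<open>The lexicographic product \<open>P\<^sub>n \<circ> P\<^sub>m\<close>\<close>

text \<open>Vertex \<open>(l, p)\<close> is vertex \<open>p\<close> of layer \<open>l\<close>.  Consecutive layers are
  completely joined, and each layer is itself a path.\<close>
abbreviation path_lex :: "nat \<Rightarrow> nat \<Rightarrow> (nat \<times> nat) graph" where
  "path_lex n m \<equiv> lex_prod (path_graph n) (path_graph m)"

definition cross_edges :: "nat \<Rightarrow> nat \<Rightarrow> (nat \<times> nat) set set" where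
  "cross_edges n m = {{(l, p), (Suc l, q)} | l p q. Suc l < n \<and> p < m \<and> q < m}"

definition layer_edges :: "nat \<Rightarrow> nat \<Rightarrow> (nat \<times> nat) set set" where
  "layer_edges n m = {{(l, p), (l, Suc p)} | l p. l < n \<and> Suc p < m}"

lemma verts_path_lex: "verts (path_lex n m) = {0..<n} \<times> {0..<m}"
  by (simp add: lex_prod_def path_graph_def verts_def)

lemma edges_path_lex: "edges (path_lex n m) = cross_edges n m \<union> layer_edges n m"
proof (intro equalityI subsetI)
  fix e assume "e \<in> edges (path_lex n m)"
  then obtain u v u' v' where e: "e = {(u, v), (u', v')}" and b: "u < n" "u' < n" "v < m" "v' < m"
    and c: "(\<exists>i. {u, u'} = {i, i + 1} \<and> i + 1 < n) \<or>
            (u = u' \<and> (\<exists>i. {v, v'} = {i, i + 1} \<and> i + 1 < m))"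
    by (simp add: lex_prod_def path_graph_def edges_def verts_def) blast
  from c show "e \<in> cross_edges n m \<union> layer_edges n m"
  proof (elim disjE exE conjE)
    fix i assume "{u, u'} = {i, i + 1}" "i + 1 < n"
    then show ?thesis using e b unfolding cross_edges_def
      by (auto simp: doubleton_eq_iff insert_commute)
  next
    fix i assume "u = u'" "{v, v'} = {i, i + 1}" "i + 1 < m"
    then show ?thesis using e b unfolding layer_edges_def
      by (auto simp: doubleton_eq_iff insert_commute)
  qed
next
  fix e assume "e \<in> cross_edges n m \<union> layer_edges n m"
  then show "e \<in> edges (path_lex n m)"
    unfolding cross_edges_def layer_edges_def lex_prod_def path_graph_def edges_def verts_def
    by auto (metis Suc_eq_plus1 Suc_lessD lessI)+
qed

lemma cross_edge: "Suc l < n \<Longrightarrow> p < m \<Longrightarrow> q < m \<Longrightarrow> {(l, p), (Suc l, q)} \<in> edges (path_lex n m)"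
  by (auto simp: edges_path_lex cross_edges_def)

lemma layer_edge: "l < n \<Longrightarrow> Suc p < m \<Longrightarrow> {(l, p), (l, Suc p)} \<in> edges (path_lex n m)"
  by (auto simp: edges_path_lex layer_edges_def)

lemma is_graph_path_lex: "is_graph (path_lex n m)"
  unfolding is_graph_def verts_path_lex edges_path_lex cross_edges_def layer_edges_def by auto

text \<open>The corner vertex \<open>(0, 0)\<close> sees the \<open>m\<close> vertices of layer \<open>1\<close> and one
  neighbour in its own layer.\<close>
lemma degree_corner: "degree (path_lex n m) (0, 0) \<le> m + 1"
proof -
  let ?spokes = "(\<lambda>q. {(0::nat, 0::nat), (1, q)}) ` {..<m}"
  have "{e \<in> edges (path_lex n m). (0, 0) \<in> e} \<subseteq> ?spokes \<union> {{(0, 0), (0, 1)}}"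
    by (auto simp: edges_path_lex cross_edges_def layer_edges_def)
  then have "degree (path_lex n m) (0, 0) \<le> card (?spokes \<union> {{(0, 0), (0, 1)}})"
    unfolding degree_def by (intro card_mono) auto
  also have "\<dots> \<le> card ?spokes + 1"
    using card_Un_le[of ?spokes "{{(0, 0), (0, 1)}}"] by simp
  also have "\<dots> \<le> m + 1"
    using card_image_le[of "{..<m}" "\<lambda>q. {(0::nat, 0::nat), (1, q)}"] by simp
  finally show ?thesis .
qed

definition reflect :: "nat \<Rightarrow> nat \<times> nat \<Rightarrow> nat \<times> nat" where
  "reflect n v = (n - 1 - fst v, snd v)"

lemma inj_on_reflect: "inj_on (reflect n) (verts (path_lex n m))"
  by (auto simp: inj_on_def reflect_def verts_path_lex)

lemma reflect_edge:
  assumes "e \<in> edges (path_lex n m)" shows "reflect n ` e \<in> edges (path_lex n m)"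
proof -
  from assms consider "e \<in> cross_edges n m" | "e \<in> layer_edges n m"
    unfolding edges_path_lex by blast
  then show ?thesis
  proof cases
    case 1
    then obtain l p q where l: "Suc l < n" "p < m" "q < m" "e = {(l, p), (Suc l, q)}"
      by (auto simp: cross_edges_def)
    then have "reflect n ` e = {(n - 2 - l, q), (Suc (n - 2 - l), p)}"
      by (auto simp: reflect_def)
    then show ?thesis using l cross_edge[of "n - 2 - l" n q m p] by simp
  next
    case 2
    then show ?thesis by (auto simp: layer_edges_def reflect_def intro!: layer_edge)
  qed
qed

section \<open>Linking families of size \<open>m + 1\<close>\<close>

lemma layer_path:
  assumes "\<And>p. Suc p < m \<Longrightarrow> {(l, p), (l, Suc p)} \<in> E"
  shows "p < m \<Longrightarrow> ((l, 0), (l, p)) \<in> (adj E)\<^sup>*"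
proof (induction p)
  case (Suc p)
  then show ?case using assms by (simp add: reach_edge_step)
qed simp

text \<open>Terminals in a single layer \<open>a\<close>: class \<open>k < m\<close> is the star from vertex
  \<open>(b, k)\<close> of a neighbouring layer \<open>b\<close> onto layer \<open>a\<close>; class \<open>m\<close> is the path
  of layer \<open>a\<close>.\<close>
lemma linking_family_one_layer:
  assumes n: "2 \<le> n" and a: "a < n" and S: "S \<subseteq> {a} \<times> {0..<m}"
  shows "\<exists>F. linking_family (path_lex n m) S (m + 1) F"
proof -
  define b where "b = (if Suc a < n then Suc a else a - 1)"
  have "b \<noteq> a" using n a by (auto simp: b_def)
  have spoke: "{(a, p), (b, k)} \<in> edges (path_lex n m)" if "p < m" "k < m" for p k
  proof (cases "Suc a < n")
    case True then show ?thesis using cross_edge[OF _ that] by (simp add: b_def)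
  next
    case False
    then have "a = Suc b" "Suc b < n" using a n by (auto simp: b_def)
    then show ?thesis using cross_edge[of b n k m p] that by (simp add: insert_commute)
  qed
  define F where "F k = (if k < m then {{(a, p), (b, k)} | p. p < m}
                         else {{(a, p), (a, Suc p)} | p. Suc p < m})" for k
  have "F k \<subseteq> edges (path_lex n m) \<and> links (F k) S" if "k < m + 1" for k
  proof (cases "k < m")
    case True
    have "((b, k), v) \<in> (adj (F k))\<^sup>*" if v: "v \<in> S" for v
    proof -
      obtain p where "v = (a, p)" "p < m" using v S by auto
      then have "{(b, k), v} \<in> F k" using True by (auto simp: F_def insert_commute)
      then show ?thesis by (rule reach_edge)
    qed
    then have "links (F k) S" by (rule links_from_hub)
    moreover have "F k \<subseteq> edges (path_lex n m)" using True spoke by (auto simp: F_def)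
    ultimately show ?thesis by blast
  next
    case False
    have "((a, 0), v) \<in> (adj (F k))\<^sup>*" if v: "v \<in> S" for v
    proof -
      obtain p where "v = (a, p)" "p < m" using v S by auto
      moreover have "{(a, p), (a, Suc p)} \<in> F k" if "Suc p < m" for p
        using False that by (auto simp: F_def)
      ultimately show ?thesis using layer_path[of m a "F k"] by blast
    qed
    then have "links (F k) S" by (rule links_from_hub)
    moreover have "F k \<subseteq> edges (path_lex n m)" using False layer_edge[OF a] by (auto simp: F_def)
    ultimately show ?thesis by blast
  qed
  moreover have "F i \<inter> F j = {}" if "i < m + 1" "j < m + 1" "i \<noteq> j" for i j
    using that \<open>b \<noteq> a\<close> by (auto simp: F_def doubleton_eq_iff)
  ultimately show ?thesis unfolding linking_family_def by blast
qed

text \<open>In every layer \<open>l\<close> a marked position \<open>u l\<close> is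
  fixed, and positions are relabelled by the transposition \<open>pos l\<close> of \<open>0\<close> and
  \<open>u l\<close>, so that relabelled position \<open>0\<close> is the marked vertex.  A cross edge
  from relabelled position \<open>p\<close> of layer \<open>l\<close> to relabelled position \<open>q\<close> of
  layer \<open>l + 1\<close> gets colour \<open>q\<close>, or \<open>p\<close> if \<open>q = 0\<close>; so class \<open>k < m\<close> contains
  the backbone through relabelled position \<open>k\<close> of every layer and attaches
  all marked vertices to it.  Two modifications serve further terminals:
  the edges from relabelled \<open>s1\<close> to \<open>s2\<close> are stolen for class \<open>m\<close>, which
  also contains all layer paths and thus spans the graph; and the edge from
  the extra vertex \<open>(a, pos a \<kappa>)\<close> to the marked vertex of layer \<open>a + 1\<close> is
  recoloured \<open>0\<close>, which attaches the extra vertex to class \<open>0\<close>.\<close>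
locale layered_colouring =
  fixes n m :: nat and u :: "nat \<Rightarrow> nat" and a \<kappa> s1 s2 :: nat
  assumes n: "2 \<le> n" and u: "\<And>l. u l < m"
    and \<kappa>: "0 < \<kappa>" "\<kappa> < m" and s1: "0 < s1" "s1 < m" "s1 \<noteq> \<kappa>"
    and s2: "0 < s2" "s2 < m" "s2 \<noteq> s1"
begin

definition pos :: "nat \<Rightarrow> nat \<Rightarrow> nat" where
  "pos l = transpose 0 (u l)"

definition colour :: "nat \<Rightarrow> nat \<Rightarrow> nat \<Rightarrow> nat" where
  "colour l p q = (if p = s1 \<and> q = s2 then m
     else if q = 0 then (if l = a \<and> p = \<kappa> then 0 else p)
     else q)"

definition F :: "nat \<Rightarrow> (nat \<times> nat) set set" where
  "F k = {{(l, pos l p), (Suc l, pos (Suc l) q)} | l p q.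
            Suc l < n \<and> p < m \<and> q < m \<and> colour l p q = k}
     \<union> (if k = m then layer_edges n m else {})"

lemma pos_less: "p < m \<Longrightarrow> pos l p < m"
  using u[of l] by (simp add: pos_def transpose_def)

lemma pos_0: "pos l 0 = u l"
  by (simp add: pos_def)

lemma pos_inj: "pos l p = pos l q \<longleftrightarrow> p = q"
  by (auto simp: pos_def dest: transpose_eq_imp_eq)

lemma F_cross:
  "Suc l < n \<Longrightarrow> p < m \<Longrightarrow> q < m \<Longrightarrow> colour l p q = k \<Longrightarrow>
   {(l, pos l p), (Suc l, pos (Suc l) q)} \<in> F k"
  unfolding F_def by blast

lemma F_edges: "F k \<subseteq> edges (path_lex n m)"
  unfolding F_def edges_path_lex by (auto intro!: pos_less simp: cross_edges_def)

lemma F_disjoint: "i \<noteq> j \<Longrightarrow> F i \<inter> F j = {}"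
  unfolding F_def layer_edges_def by (auto simp: doubleton_eq_iff pos_inj)

lemma F_layer: "l < n \<Longrightarrow> Suc p < m \<Longrightarrow> {(l, p), (l, Suc p)} \<in> F m"
  by (auto simp: F_def layer_edges_def)

lemma colour_backbone: "colour l k k = k"
  using s1 s2 \<kappa> by (auto simp: colour_def)

lemma colour_attach_up: "p \<noteq> s1 \<Longrightarrow> 0 < k \<Longrightarrow> colour l p k = k"
  by (simp add: colour_def)

lemma colour_attach_down: "\<not> (l = a \<and> k = \<kappa>) \<Longrightarrow> colour l k 0 = k"
  using s2 by (auto simp: colour_def)

lemma colour_exception: "colour a \<kappa> 0 = 0"
  using s1 s2 by (simp add: colour_def)

lemma colour_stolen: "colour l s1 s2 = m"
  by (simp add: colour_def)

lemma backbone: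
  assumes k: "k < m" shows "l < n \<Longrightarrow> ((0, pos 0 k), (l, pos l k)) \<in> (adj (F k))\<^sup>*"
proof (induction l)
  case (Suc l)
  have "{(l, pos l k), (Suc l, pos (Suc l) k)} \<in> F k"
    using F_cross[OF Suc.prems k k colour_backbone] .
  then show ?case using Suc by (simp add: reach_edge_step)
qed simp

text \<open>The vertices that every class reaches: marked vertices (except in the
  last layer when the recoloured edge ends there) and the extra vertex.\<close>
definition served :: "nat \<times> nat \<Rightarrow> bool" where
  "served v \<longleftrightarrow> (\<exists>l<n. v = (l, u l) \<and> (Suc l = n \<longrightarrow> Suc a \<noteq> l)) \<or>
                 (v = (a, pos a \<kappa>) \<and> Suc a < n)"

lemma class_reaches_served:
  assumes k: "k < m" and v: "served v"
  shows "((0, pos 0 k), v) \<in> (adj (F k))\<^sup>*"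
  using v unfolding served_def
proof (elim disjE exE conjE)
  fix l assume l: "l < n" "v = (l, u l)" and last: "Suc l = n \<longrightarrow> Suc a \<noteq> l"
  show ?thesis
  proof (cases "k = 0")
    case True then show ?thesis using backbone[OF k l(1)] l(2) by (simp add: pos_0)
  next
    case False
    show ?thesis
    proof (cases "Suc l < n")
      case True
      have "{(l, pos l 0), (Suc l, pos (Suc l) k)} \<in> F k"
        using F_cross[OF True _ k colour_attach_up] s1 False by simp
      then show ?thesis
        using backbone[OF k True] l(2) by (simp add: pos_0 reach_edge_step')
    next
      case False
      then obtain l' where l': "l = Suc l'" "l' \<noteq> a" using l(1) last n by (cases l) auto
      have "{(l', pos l' k), (l, pos l 0)} \<in> F k"
        using F_cross[OF _ k _ colour_attach_down] l' l(1) \<kappa> by simp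
      then show ?thesis
        using backbone[OF k, of l'] l l' by (simp add: pos_0 reach_edge_step)
    qed
  qed
next
  assume x: "v = (a, pos a \<kappa>)" "Suc a < n"
  have "{(a, pos a \<kappa>), (Suc a, pos (Suc a) k)} \<in> F k"
  proof (cases "k = 0")
    case True then show ?thesis using F_cross[OF x(2) \<kappa>(2) k] colour_exception by simp
  next
    case False then show ?thesis using F_cross[OF x(2) \<kappa>(2) k colour_attach_up] s1 by simp
  qed
  then show ?thesis using backbone[OF k x(2)] x(1) by (simp add: reach_edge_step')
qed

text \<open>Class \<open>m\<close> reaches every vertex: layer paths plus the stolen edges.\<close>
lemma class_m_spans:
  assumes "l < n" "p < m" shows "((0, 0), (l, p)) \<in> (adj (F m))\<^sup>*"
proof -
  have layer: "((l, 0), (l, p)) \<in> (adj (F m))\<^sup>*" if "l < n" "p < m" for l p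
    using F_layer that by (intro layer_path) auto
  have "((0, 0), (l, 0)) \<in> (adj (F m))\<^sup>*" if "l < n" for l
    using that
  proof (induction l)
    case (Suc l)
    have "{(l, pos l s1), (Suc l, pos (Suc l) s2)} \<in> F m"
      using F_cross[OF Suc.prems s1(2) s2(2) colour_stolen] .
    moreover have "((0, 0), (l, pos l s1)) \<in> (adj (F m))\<^sup>*"
      using Suc layer[of l "pos l s1"] pos_less[OF s1(2)] by (auto intro: rtrancl_trans)
    ultimately have "((0, 0), (Suc l, pos (Suc l) s2)) \<in> (adj (F m))\<^sup>*"
      by (rule reach_edge_step[rotated])
    then show ?case
      using reach_sym[OF layer[OF Suc.prems pos_less[OF s2(2)]]] by (rule rtrancl_trans)
  qed simp
  then show ?thesis using assms layer by (blast intro: rtrancl_trans)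
qed

theorem colour_classes_linking:
  assumes "\<And>v. v \<in> S \<Longrightarrow> served v"
  shows "linking_family (path_lex n m) S (m + 1) F"
proof -
  have "links (F k) S" if "k < m + 1" for k
  proof (cases "k < m")
    case True then show ?thesis
      using class_reaches_served assms by (blast intro: links_from_hub)
  next
    case False
    then have "k = m" using that by simp
    moreover have "v \<in> S \<Longrightarrow> fst v < n \<and> snd v < m" for v
      using assms[of v] u pos_less[OF \<kappa>(2)] by (auto simp: served_def)
    ultimately show ?thesis
      using class_m_spans by (metis links_from_hub prod.collapse)
  qed
  then show ?thesis using F_edges F_disjoint by (simp add: linking_family_def)
qed

end

text \<open>Terminals in pairwise distinct layers: mark them and use no extra vertex
  (the exceptional layer \<open>a = n\<close> does not exist).\<close>
lemma linking_family_transversal: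
  assumes n: "2 \<le> n" and m: "3 \<le> m" and S: "S \<subseteq> verts (path_lex n m)" and inj: "inj_on fst S"
  shows "\<exists>F. linking_family (path_lex n m) S (m + 1) F"
proof -
  define u where "u l = (if l \<in> fst ` S then snd (the_inv_into S fst l) else 0)" for l
  have u_less: "u l < m" for l
  proof (cases "l \<in> fst ` S")
    case True
    then have "the_inv_into S fst l \<in> S" by (rule the_inv_into_into[OF inj]) simp
    then show ?thesis using True S by (auto simp: u_def verts_path_lex)
  qed (use m in \<open>simp add: u_def\<close>)
  interpret layered_colouring n m u n 1 2 1
    using n m u_less by unfold_locales auto
  have "served v" if "v \<in> S" for v
  proof -
    have "u (fst v) = snd v"
      using that the_inv_into_f_f[OF inj that] by (simp add: u_def)
    moreover have "fst v < n" using that S by (auto simp: verts_path_lex)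
    ultimately show ?thesis unfolding served_def by (intro disjI1 exI[of _ "fst v"]) auto
  qed
  then show ?thesis using colour_classes_linking by blast
qed

text \<open>Two terminals in layer \<open>a\<close>, one in layer \<open>b\<close>: mark \<open>(a, c)\<close> and \<open>(b, d)\<close>
  and make \<open>(a, c')\<close> the extra vertex.  This needs layer \<open>a + 1\<close> to exist and
  the recoloured edge not to end at a terminal in the last layer.\<close>
lemma linking_family_two_in_layer_upward:
  assumes n: "2 \<le> n" and m: "3 \<le> m"
    and ab: "a \<noteq> b" "Suc a < n" "b < n" "Suc b = n \<longrightarrow> Suc a \<noteq> b"
    and c: "c < m" "c' < m" "d < m" "c \<noteq> c'"
  shows "\<exists>F. linking_family (path_lex n m) {(a, c), (a, c'), (b, d)} (m + 1) F"
proof -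
  define u where "u l = (if l = a then c else d)" for l
  define \<kappa> where "\<kappa> = transpose 0 c c'"
  define s1 where "s1 = (if \<kappa> = 1 then 2 else 1 :: nat)"
  define s2 where "s2 = (if \<kappa> = 1 then 1 else 2 :: nat)"
  have "0 < \<kappa>" "\<kappa> < m" using c by (auto simp: \<kappa>_def transpose_def)
  interpret layered_colouring n m u a \<kappa> s1 s2
    using n m c \<open>0 < \<kappa>\<close> \<open>\<kappa> < m\<close> by unfold_locales (auto simp: u_def s1_def s2_def)
  have "pos a \<kappa> = c'" by (simp add: pos_def u_def \<kappa>_def)
  then have "served v" if "v \<in> {(a, c), (a, c'), (b, d)}" for v
    using that ab by (auto simp: served_def u_def)
  then show ?thesis using colour_classes_linking by blast
qed

text \<open>If these conditions fail, they hold after reversing the layers.\<close>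
lemma linking_family_two_in_layer:
  assumes n: "3 \<le> n" and m: "3 \<le> m" and S: "{x, y, z} \<subseteq> verts (path_lex n m)"
    and xy: "x \<noteq> y" "fst x = fst y" and z: "fst z \<noteq> fst x"
  shows "\<exists>F. linking_family (path_lex n m) {x, y, z} (m + 1) F"
proof -
  obtain a c c' b d where xyz: "x = (a, c)" "y = (a, c')" "z = (b, d)"
    using xy by (metis prod.collapse)
  have bounds: "a < n" "b < n" "c < m" "c' < m" "d < m" "a \<noteq> b" "c \<noteq> c'"
    using S xy z by (auto simp: xyz verts_path_lex)
  show ?thesis
  proof (cases "Suc a < n \<and> (Suc b = n \<longrightarrow> Suc a \<noteq> b)")
    case True
    then show ?thesis
      using linking_family_two_in_layer_upward[of n m a b c c' d] n m bounds by (simp add: xyz)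
  next
    case False
    define a' b' where "a' = n - 1 - a" and "b' = n - 1 - b"
    have "Suc a' < n \<and> (Suc b' = n \<longrightarrow> Suc a' \<noteq> b')" "a' \<noteq> b'" "b' < n"
      using False n bounds by (auto simp: a'_def b'_def)
    then obtain F where "linking_family (path_lex n m) {(a', c), (a', c'), (b', d)} (m + 1) F"
      using linking_family_two_in_layer_upward[of n m a' b' c c' d] n m bounds by auto
    from linking_family_image[OF is_graph_path_lex inj_on_reflect reflect_edge this]
    have "\<exists>F. linking_family (path_lex n m) (reflect n ` {(a', c), (a', c'), (b', d)}) (m + 1) F"
      by blast
    moreover have "reflect n ` {(a', c), (a', c'), (b', d)} = {x, y, z}"
      using bounds by (auto simp: xyz reflect_def a'_def b'_def)
    ultimately show ?thesis by simp
  qed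
qed

lemma linking_family_three:
  assumes n: "3 \<le> n" and m: "3 \<le> m" and S: "S \<subseteq> verts (path_lex n m)" "card S = 3"
  shows "\<exists>F. linking_family (path_lex n m) S (m + 1) F"
proof -
  obtain x y z where xyz: "S = {x, y, z}" "x \<noteq> y" "y \<noteq> z" "x \<noteq> z"
    using S(2) card_3_iff by metis
  consider "fst x = fst y" "fst y = fst z" | "fst x = fst y" "fst z \<noteq> fst x"
    | "fst x = fst z" "fst y \<noteq> fst x" | "fst y = fst z" "fst x \<noteq> fst y"
    | "inj_on fst S"
    by (cases "fst x = fst y"; cases "fst y = fst z"; cases "fst x = fst z")
      (auto simp: xyz(1) inj_on_def)
  then show ?thesis
  proof cases
    case 1
    then have "S \<subseteq> {fst x} \<times> {0..<m}" using S(1) xyz(1) by (auto simp: verts_path_lex)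
    moreover have "fst x < n" using S(1) xyz(1) by (auto simp: verts_path_lex)
    ultimately show ?thesis using linking_family_one_layer n by simp
  next
    case 2 then show ?thesis using linking_family_two_in_layer[OF n m] S xyz by simp
  next
    case 3
    then have "\<exists>F. linking_family (path_lex n m) {x, z, y} (m + 1) F"
      using linking_family_two_in_layer[OF n m] S xyz by simp
    then show ?thesis using xyz(1) by (simp add: insert_commute)
  next
    case 4
    then have "\<exists>F. linking_family (path_lex n m) {y, z, x} (m + 1) F"
      using linking_family_two_in_layer[OF n m] S xyz by simp
    then show ?thesis using xyz(1) by (simp add: insert_commute)
  next
    case 5 then show ?thesis using linking_family_transversal n m S(1) by simp
  qed
qed

lemma lambda_S_ge:
  assumes n: "3 \<le> n" and m: "3 \<le> m" and S: "S \<subseteq> verts (path_lex n m)" "card S = 3"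
  shows "m + 1 \<le> lambda_S (path_lex n m) S"
proof -
  obtain x y where "x \<in> S" "y \<in> S" "x \<noteq> y" using S(2) card_3_iff by (metis insertI1 insertI2)
  moreover obtain F where "linking_family (path_lex n m) S (m + 1) F"
    using linking_family_three[OF n m S] by blast
  ultimately show ?thesis using linking_family_le_lambda_S[OF is_graph_path_lex S(1)] by blast
qed

lemma lambda_S_corner_le: "lambda_S (path_lex n m) {(0, 0), (0, 1), (0, 2)} \<le> m + 1"
proof -
  have "lambda_S (path_lex n m) {(0, 0), (0, 1), (0, 2)} \<le> degree (path_lex n m) (0, 0)"
    by (rule lambda_S_le_degree[OF is_graph_path_lex, of _ _ "(0, 1)"]) auto
  also have "\<dots> \<le> m + 1" by (rule degree_corner)
  finally show ?thesis .
qed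

theorem corollary3p5:
  fixes n1 n2 :: nat
  assumes "n1 \<ge> 3" and "n2 \<ge> 3"
  shows "lambda3 (lex_prod (path_graph n1) (path_graph n2)) = n2 + 1"
  unfolding lambda3_def
proof (rule cInf_eq_minimum)
  let ?S0 = "{(0, 0), (0, 1), (0, 2)} :: (nat \<times> nat) set"
  have S0: "?S0 \<subseteq> verts (path_lex n1 n2)" "card ?S0 = 3"
    using assms by (auto simp: verts_path_lex)
  then have "lambda_S (path_lex n1 n2) ?S0 = n2 + 1"
    using lambda_S_corner_le lambda_S_ge[OF assms] by (simp add: order_antisym)
  then show "n2 + 1 \<in> {lambda_S (path_lex n1 n2) S |S. S \<subseteq> verts (path_lex n1 n2) \<and> card S = 3}"
    using S0 by (intro CollectI exI[of _ ?S0]) simp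
next
  fix x assume "x \<in> {lambda_S (path_lex n1 n2) S |S. S \<subseteq> verts (path_lex n1 n2) \<and> card S = 3}"
  then show "n2 + 1 \<le> x" using lambda_S_ge[OF assms] by blast
qed

end
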